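(* Let $X_1,\dots,X_n$ be i.i.d. with distribution function $F$, fix $z>0$ with $p=F(z)>0$, and let $Q(u)=\inf\{x: F(x)\ge u\}$. Suppose $Q$ is continuous on $[0,p]$ and $\int_0^p |Q(u)|\,du<\infty$. Then the estimator $\widehat S=\frac{2}{z}\frac{U_1}{U_2}$ is an asymptotically unbiased estimator of the Sen index $S$, i.e. $E(\widehat S)\to S$ as $n\to\infty$.
   Context: $F$ is the distribution function of a nonnegative random variable (income), and $X_1,X_2$ denote independent draws from $F$. The Sen index is $S=\frac{2}{zF(z)}\int_0^z (z-x)\,(F(z)-F(x))\,dF(x)=\frac{2}{z}\frac{\Delta_1}{\Delta_2}$ with $\Delta_1=E\big[(z-X_1)I(X_1<X_2\le z)\big]$ and $\Delta_2=F(z)$. Define $\psi_1(x_1,x_2)=\tfrac12\big[(z-x_1)I(x_1<x_2\le z)+(z-x_2)I(x_2<x_1\le z)\big]$, $\psi_2(x_1,x_2)=\tfrac12\big[I(x_1\le z)+I(x_2\le z)\big]$, $U_1=\binom n2^{-1}\sum_{1\le j<i\le n}\psi_1(X_i,X_j)$, $U_2=\binom n2^{-1}\sum_{1\le j<i\le n}\psi_2(X_i,X_j)$. *)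

theory Defs
  imports "HOL-Probability.Probability"
begin

definition quantile :: "(real \<Rightarrow> real) \<Rightarrow> real \<Rightarrow> real" where
  "quantile F u = Inf {x. F x \<ge> u}"

definition psi1 :: "real \<Rightarrow> real \<Rightarrow> real \<Rightarrow> real" where
  "psi1 z x1 x2 = (1/2) * ((z - x1) * (if x1 < x2 \<and> x2 \<le> z then 1 else 0)
                         + (z - x2) * (if x2 < x1 \<and> x1 \<le> z then 1 else 0))"

definition psi2 :: "real \<Rightarrow> real \<Rightarrow> real \<Rightarrow> real" where
  "psi2 z x1 x2 = (1/2) * ((if x1 \<le> z then 1 else 0) + (if x2 \<le> z then 1 else 0))"

definition U1 :: "real \<Rightarrow> (nat \<Rightarrow> 'a \<Rightarrow> real) \<Rightarrow> nat \<Rightarrow> 'a \<Rightarrow> real" where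
  "U1 z X n \<omega> = inverse (real (n choose 2)) *
     (\<Sum>i<n. \<Sum>j<i. psi1 z (X i \<omega>) (X j \<omega>))"

definition U2 :: "real \<Rightarrow> (nat \<Rightarrow> 'a \<Rightarrow> real) \<Rightarrow> nat \<Rightarrow> 'a \<Rightarrow> real" where
  "U2 z X n \<omega> = inverse (real (n choose 2)) *
     (\<Sum>i<n. \<Sum>j<i. psi2 z (X i \<omega>) (X j \<omega>))"

text \<open>The estimator S_hat = (2/z) U1/U2 (with Isabelle's convention x/0 = 0).\<close>
definition S_hat :: "real \<Rightarrow> (nat \<Rightarrow> 'a \<Rightarrow> real) \<Rightarrow> nat \<Rightarrow> 'a \<Rightarrow> real" where
  "S_hat z X n \<omega> = (2 / z) * (U1 z X n \<omega> / U2 z X n \<omega>)"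

text \<open>Sen index S = 2/(z F(z)) * int_0^z (z - x)(F(z) - F(x)) dF(x),
  where dF is the distribution (law) mu of the income variable.\<close>
definition sen_index :: "real \<Rightarrow> (real \<Rightarrow> real) \<Rightarrow> real measure \<Rightarrow> real" where
  "sen_index z F \<mu> = (2 / (z * F z)) *
     (LINT x : {0..z} | \<mu>. (z - x) * (F z - F x))"

end

theory Submission
  imports Defs "HOL-Real_Asymp.Real_Asymp"
begin

text \<open>Let N be the number of sample points at or below the poverty line z. Then U2 = N / n and,
  for nonnegative data, S_hat = 2 / (z (n - 1)) * sum_{i != j} g(X_i, X_j) / N with the one-sided
  kernel g x y = (z - x) I(0 <= x < y <= z). A summand vanishes unless X_i, X_j <= z, and then
  N = 2 + N_ij, where N_ij counts the remaining points and is independent of (X_i, X_j). Hence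
  E[g(X_i, X_j) / N] = Delta_1 c_n with c_n = E[1 / (2 + N_ij)]. The same argument for the kernel
  I(x <= z) I(y <= z) gives p^2 c_n, and since the normalised pair sum of that kernel is
  N - 1 + I(N = 0), this determines c_n. The result is the exact value
  E S_hat = 2 Delta_1 (n p - 1 + (1 - p)^n) / (z p^2 (n - 1)), which tends to 2 Delta_1 / (z p) = S.\<close>

lemma sum_lessThan_pairs_conv_offdiag:
  fixes f :: "nat \<Rightarrow> nat \<Rightarrow> 'a::comm_monoid_add"
  shows "(\<Sum>i<n. \<Sum>j<i. f i j + f j i) = (\<Sum>i<n. \<Sum>j\<in>{..<n}-{i}. f i j)"
proof (induction n)
  case (Suc n)
  have "{..<Suc n} - {i} = insert n ({..<n} - {i})" if "i < n" for i
    using that by auto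
  then have "(\<Sum>i<n. \<Sum>j\<in>{..<Suc n}-{i}. f i j) = (\<Sum>i<n. \<Sum>j\<in>{..<n}-{i}. f i j) + (\<Sum>i<n. f i n)"
    by (simp add: sum.distrib add.commute)
  moreover have "{..<Suc n} - {n} = {..<n}"
    by auto
  ultimately show ?case
    using Suc by (simp add: sum.distrib ac_simps)
qed simp

text \<open>The summand of_bool (N = 0) compensates for the convention 0 / 0 = 0.\<close>

lemma sum_offdiag_idem_div_sum:
  fixes b :: "nat \<Rightarrow> real" and n :: nat
  assumes idem: "\<And>k. b k * b k = b k"
  defines "N \<equiv> \<Sum>k<n. b k"
  shows "(\<Sum>i<n. \<Sum>j\<in>{..<n}-{i}. b i * b j / N) = N - 1 + of_bool (N = 0)"
proof -
  have "(\<Sum>j\<in>{..<n}-{i}. b i * b j) = b i * N - b i" if "i < n" for i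
  proof -
    have "(\<Sum>j\<in>{..<n}-{i}. b i * b j) = b i * (N - b i)"
      using that by (simp add: N_def sum_diff1 sum_distrib_left right_diff_distrib)
    then show ?thesis
      by (simp add: right_diff_distrib idem)
  qed
  then have "(\<Sum>i<n. \<Sum>j\<in>{..<n}-{i}. b i * b j) = N * N - N"
    by (simp add: sum_subtractf N_def sum_distrib_right)
  then show ?thesis
    by (cases "N = 0") (simp_all add: field_simps flip: sum_divide_distrib)
qed

lemma real_choose_two: "real (n choose 2) = real n * (real n - 1) / 2"
  by (induction n) (simp_all add: numeral_2_eq_2 field_simps)

lemma integral_sum_offdiag:
  fixes f :: "nat \<Rightarrow> nat \<Rightarrow> 'a \<Rightarrow> 'b::{banach, second_countable_topology}"
  assumes "\<And>i j. i < n \<Longrightarrow> j < n \<Longrightarrow> i \<noteq> j \<Longrightarrow> integrable M (f i j)"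
  shows "(\<integral>\<omega>. (\<Sum>i<n. \<Sum>j\<in>{..<n}-{i}. f i j \<omega>) \<partial>M) = (\<Sum>i<n. \<Sum>j\<in>{..<n}-{i}. integral\<^sup>L M (f i j))"
proof -
  have "(\<integral>\<omega>. (\<Sum>i<n. \<Sum>j\<in>{..<n}-{i}. f i j \<omega>) \<partial>M) = (\<Sum>i<n. \<integral>\<omega>. (\<Sum>j\<in>{..<n}-{i}. f i j \<omega>) \<partial>M)"
    using assms by (intro Bochner_Integration.integral_sum Bochner_Integration.integrable_sum) auto
  also have "\<dots> = (\<Sum>i<n. \<Sum>j\<in>{..<n}-{i}. integral\<^sup>L M (f i j))"
    using assms by (intro sum.cong refl Bochner_Integration.integral_sum) auto
  finally show ?thesis .
qed

lemma (in prob_space) indep_vars_indep_var: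
  assumes "indep_vars M' X I" "i \<in> I" "j \<in> I" "i \<noteq> j"
  shows "indep_var (M' i) (X i) (M' j) (X j)"
proof -
  have "indep_var (PiM {i} M') (\<lambda>\<omega>. restrict (\<lambda>k. X k \<omega>) {i})
      (PiM {j} M') (\<lambda>\<omega>. restrict (\<lambda>k. X k \<omega>) {j})"
    using assms by (intro indep_var_restrict) auto
  then have "indep_var (M' i) ((\<lambda>x. x i) \<circ> (\<lambda>\<omega>. restrict (\<lambda>k. X k \<omega>) {i}))
      (M' j) ((\<lambda>x. x j) \<circ> (\<lambda>\<omega>. restrict (\<lambda>k. X k \<omega>) {j}))"
    by (rule indep_var_compose) auto
  then show ?thesis
    by (simp add: comp_def)
qed

lemma (in prob_space) indep_var_pair_block:
  fixes X :: "'i \<Rightarrow> 'a \<Rightarrow> 'b" and g :: "'b \<Rightarrow> 'b \<Rightarrow> real"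
  assumes indep: "indep_vars (\<lambda>_. N) X I" and "i \<in> I" "j \<in> I" "K \<subseteq> I" "i \<notin> K" "j \<notin> K"
    and g: "case_prod g \<in> borel_measurable (N \<Otimes>\<^sub>M N)"
    and h: "h \<in> borel_measurable (PiM K (\<lambda>_. N))"
  shows "indep_var borel (\<lambda>\<omega>. g (X i \<omega>) (X j \<omega>)) borel (\<lambda>\<omega>. h (\<lambda>k\<in>K. X k \<omega>))"
proof -
  have "indep_var (PiM {i,j} (\<lambda>_. N)) (\<lambda>\<omega>. \<lambda>k\<in>{i,j}. X k \<omega>) (PiM K (\<lambda>_. N)) (\<lambda>\<omega>. \<lambda>k\<in>K. X k \<omega>)"
    using assms by (intro indep_var_restrict[OF indep]) auto
  moreover have "(\<lambda>x. case_prod g (x i, x j)) \<in> borel_measurable (PiM {i,j} (\<lambda>_. N))"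
    using g by measurable
  ultimately show ?thesis
    using h by (auto dest: indep_var_compose simp: comp_def)
qed

lemma (in prob_space) expectation_indep_var_pair:
  fixes g :: "'b \<Rightarrow> 'b \<Rightarrow> real"
  assumes indep: "indep_var N Y N' Z"
    and g: "case_prod g \<in> borel_measurable (N \<Otimes>\<^sub>M N')"
    and bound: "\<And>x y. \<bar>g x y\<bar> \<le> B"
  shows "expectation (\<lambda>\<omega>. g (Y \<omega>) (Z \<omega>)) = (\<integral>x. \<integral>y. g x y \<partial>distr M N' Z \<partial>distr M N Y)"
proof -
  have Y: "random_variable N Y" and Z: "random_variable N' Z"
    using indep by (blast dest: indep_var_rv1 indep_var_rv2)+
  interpret Y: prob_space "distr M N Y"
    using Y by (rule prob_space_distr)
  interpret Z: prob_space "distr M N' Z"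
    using Z by (rule prob_space_distr)
  interpret YZ: pair_prob_space "distr M N Y" "distr M N' Z" ..
  have "expectation (\<lambda>\<omega>. g (Y \<omega>) (Z \<omega>)) =
      integral\<^sup>L (distr M (N \<Otimes>\<^sub>M N') (\<lambda>\<omega>. (Y \<omega>, Z \<omega>))) (case_prod g)"
    using Y Z g by (simp add: integral_distr)
  also have "\<dots> = integral\<^sup>L (distr M N Y \<Otimes>\<^sub>M distr M N' Z) (case_prod g)"
    using indep by (simp add: indep_var_distribution_eq)
  also have "\<dots> = (\<integral>x. \<integral>y. g x y \<partial>distr M N' Z \<partial>distr M N Y)"
  proof -
    have "integrable (distr M N Y \<Otimes>\<^sub>M distr M N' Z) (case_prod g)"
      using g bound by (intro YZ.P.integrable_const_bound[where B=B]) auto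
    from YZ.integral_fst'[OF this] show ?thesis
      by simp
  qed
  finally show ?thesis .
qed

definition gap_kernel :: "real \<Rightarrow> real \<Rightarrow> real \<Rightarrow> real" where
  "gap_kernel z x y = (if 0 \<le> x \<and> x < y \<and> y \<le> z then z - x else 0)"

definition both_poor :: "real \<Rightarrow> real \<Rightarrow> real \<Rightarrow> real" where
  "both_poor z x y = indicator {..z} x * indicator {..z} y"

lemma gap_kernel_measurable [measurable]:
  "case_prod (gap_kernel z) \<in> borel_measurable (borel \<Otimes>\<^sub>M borel)"
  unfolding gap_kernel_def by measurable

lemma both_poor_measurable [measurable]:
  "case_prod (both_poor z) \<in> borel_measurable (borel \<Otimes>\<^sub>M borel)"
  unfolding both_poor_def by measurable

lemma gap_kernel_abs_le: "\<bar>gap_kernel z x y\<bar> \<le> \<bar>z\<bar>"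
  by (simp add: gap_kernel_def)

lemma gap_kernel_nonzeroD: "gap_kernel z x y \<noteq> 0 \<Longrightarrow> x \<le> z \<and> y \<le> z"
  by (auto simp: gap_kernel_def split: if_splits)

lemma both_poor_abs_le: "\<bar>both_poor z x y\<bar> \<le> 1"
  by (simp add: both_poor_def indicator_def)

lemma both_poor_nonzeroD: "both_poor z x y \<noteq> 0 \<Longrightarrow> x \<le> z \<and> y \<le> z"
  by (auto simp: both_poor_def indicator_def split: if_splits)

locale poverty_sample = prob_space M for M :: "'a measure" +
  fixes X :: "nat \<Rightarrow> 'a \<Rightarrow> real" and F :: "real \<Rightarrow> real" and z p :: real
  assumes rv [measurable]: "\<And>i. X i \<in> borel_measurable M"
    and indep: "indep_vars (\<lambda>_. borel) X UNIV"
    and cdf: "\<And>i x. F x = measure M {\<omega> \<in> space M. X i \<omega> \<le> x}"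
    and nonneg: "\<And>i. AE \<omega> in M. X i \<omega> \<ge> 0"
    and p_def: "p = F z" and p_pos: "p > 0"
begin

abbreviation \<mu> :: "real measure" where
  "\<mu> \<equiv> distr M borel (X 0)"

abbreviation \<Delta>\<^sub>1 :: real where
  "\<Delta>\<^sub>1 \<equiv> LINT x : {0..z} | \<mu>. (z - x) * (F z - F x)"

definition num_poor :: "nat \<Rightarrow> 'a \<Rightarrow> real" where
  "num_poor n \<omega> = (\<Sum>k<n. indicator {..z} (X k \<omega>))"

lemma num_poor_measurable [measurable]: "num_poor n \<in> borel_measurable M"
  unfolding num_poor_def by measurable

lemma prob_space_\<mu>: "prob_space \<mu>"
  by (simp add: prob_space_distr)

lemma distr_X: "distr M borel (X i) = \<mu>"
proof (rule cdf_unique)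
  show "cdf (distr M borel (X i)) = cdf \<mu>"
    by (rule ext) (simp add: cdf_def measure_distr vimage_def Int_def conj_commute flip: cdf)
qed auto

lemma measure_\<mu>_atMost: "measure \<mu> {..x} = F x"
  using cdf[where i=0 and x=x] by (simp add: measure_distr vimage_def Int_def conj_commute)

lemma measure_\<mu>_greaterThanAtMost:
  assumes "x \<le> y"
  shows "measure \<mu> {x<..y} = F y - F x"
proof -
  interpret \<mu>: prob_space \<mu>
    by (rule prob_space_\<mu>)
  have "{x<..y} = {..y} - {..x}"
    by auto
  then show ?thesis
    using assms by (simp add: \<mu>.finite_measure_Diff measure_\<mu>_atMost)
qed

lemma prob_X_le: "prob {\<omega> \<in> space M. X i \<omega> \<le> z} = p"
  using cdf[where i=i and x=z] p_def by simp

lemma double_integral_gap_kernel: "(\<integral>x. \<integral>y. gap_kernel z x y \<partial>\<mu> \<partial>\<mu>) = \<Delta>\<^sub>1"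
proof -
  interpret \<mu>: prob_space \<mu>
    by (rule prob_space_\<mu>)
  have "gap_kernel z x = (\<lambda>y. (if 0 \<le> x \<and> x \<le> z then z - x else 0) * indicator {x<..z} y)" for x
    by (auto simp: gap_kernel_def indicator_def)
  then have "(\<integral>y. gap_kernel z x y \<partial>\<mu>) = indicator {0..z} x *\<^sub>R ((z - x) * (F z - F x))" for x
    by (simp add: measure_\<mu>_greaterThanAtMost)
  then show ?thesis
    by (simp add: set_lebesgue_integral_def)
qed

lemma double_integral_both_poor: "(\<integral>x. \<integral>y. both_poor z x y \<partial>\<mu> \<partial>\<mu>) = p\<^sup>2"
proof -
  interpret \<mu>: prob_space \<mu>
    by (rule prob_space_\<mu>)
  show ?thesis
    by (simp add: both_poor_def measure_\<mu>_atMost p_def power2_eq_square)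
qed

lemma expectation_X_pair:
  fixes g :: "real \<Rightarrow> real \<Rightarrow> real"
  assumes "i \<noteq> j" and "case_prod g \<in> borel_measurable (borel \<Otimes>\<^sub>M borel)"
    and "\<And>x y. \<bar>g x y\<bar> \<le> B"
  shows "expectation (\<lambda>\<omega>. g (X i \<omega>) (X j \<omega>)) = (\<integral>x. \<integral>y. g x y \<partial>\<mu> \<partial>\<mu>)"
  using expectation_indep_var_pair[OF indep_vars_indep_var[OF indep UNIV_I UNIV_I assms(1)]
      assms(2,3)]
  by (simp only: distr_X[of i] distr_X[of j])

lemma num_poor_eq_two_plus_others:
  assumes "i < n" "j < n" "i \<noteq> j" "X i \<omega> \<le> z" "X j \<omega> \<le> z"
  shows "num_poor n \<omega> = 2 + (\<Sum>k\<in>{..<n}-{i,j}. indicator {..z} (X k \<omega>))"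
proof -
  define a :: "nat \<Rightarrow> real" where "a k = indicator {..z} (X k \<omega>)" for k
  have "(\<Sum>k<n. a k) = a i + (\<Sum>k\<in>{..<n}-{i}. a k)"
    using assms by (intro sum.remove) auto
  also have "(\<Sum>k\<in>{..<n}-{i}. a k) = a j + (\<Sum>k\<in>{..<n}-{i}-{j}. a k)"
    using assms by (intro sum.remove) auto
  also have "{..<n}-{i}-{j} = {..<n}-{i,j}"
    by auto
  finally show ?thesis
    using assms by (simp add: num_poor_def a_def)
qed

lemma expectation_kernel_div_num_poor:
  fixes g :: "real \<Rightarrow> real \<Rightarrow> real"
  assumes ij: "i < n" "j < n" "i \<noteq> j"
    and g [measurable]: "case_prod g \<in> borel_measurable (borel \<Otimes>\<^sub>M borel)"
    and bound: "\<And>x y. \<bar>g x y\<bar> \<le> B"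
    and poor: "\<And>x y. g x y \<noteq> 0 \<Longrightarrow> x \<le> z \<and> y \<le> z"
  defines "R \<equiv> \<lambda>\<omega>. 1 / (2 + (\<Sum>k\<in>{..<n}-{i,j}. indicator {..z} (X k \<omega>)))"
  shows "integrable M (\<lambda>\<omega>. g (X i \<omega>) (X j \<omega>) / num_poor n \<omega>)"
    and "expectation (\<lambda>\<omega>. g (X i \<omega>) (X j \<omega>) / num_poor n \<omega>) =
      (\<integral>x. \<integral>y. g x y \<partial>\<mu> \<partial>\<mu>) * expectation R"
proof -
  have div_eq: "g (X i \<omega>) (X j \<omega>) / num_poor n \<omega> = g (X i \<omega>) (X j \<omega>) * R \<omega>" for \<omega>
    using poor[of "X i \<omega>" "X j \<omega>"] num_poor_eq_two_plus_others[OF ij, of \<omega>]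
    by (cases "g (X i \<omega>) (X j \<omega>) = 0") (auto simp: R_def)
  have "indep_var borel (\<lambda>\<omega>. g (X i \<omega>) (X j \<omega>)) borel
      (\<lambda>\<omega>. (\<lambda>x. 1 / (2 + (\<Sum>k\<in>{..<n}-{i,j}. indicator {..z} (x k)))) (\<lambda>k\<in>{..<n}-{i,j}. X k \<omega>))"
    using ij by (intro indep_var_pair_block[OF indep]) auto
  then have indep_gR: "indep_var borel (\<lambda>\<omega>. g (X i \<omega>) (X j \<omega>)) borel R"
    by (simp add: R_def cong: sum.cong_simp)
  have int_g: "integrable M (\<lambda>\<omega>. g (X i \<omega>) (X j \<omega>))"
    using measurable_compose[OF measurable_Pair[OF rv rv] g] bound
    by (intro integrable_const_bound[where B=B]) auto
  have int_R: "integrable M R"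
    unfolding R_def
    by (intro integrable_const_bound[where B=1] AE_I2) (auto simp: divide_le_eq_1 sum_nonneg)
  show "integrable M (\<lambda>\<omega>. g (X i \<omega>) (X j \<omega>) / num_poor n \<omega>)"
    unfolding div_eq by (rule indep_var_integrable[OF indep_gR int_g int_R])
  have "expectation (\<lambda>\<omega>. g (X i \<omega>) (X j \<omega>) / num_poor n \<omega>) =
      expectation (\<lambda>\<omega>. g (X i \<omega>) (X j \<omega>)) * expectation R"
    unfolding div_eq by (rule indep_var_lebesgue_integral[OF indep_gR int_g int_R])
  then show "expectation (\<lambda>\<omega>. g (X i \<omega>) (X j \<omega>) / num_poor n \<omega>) =
      (\<integral>x. \<integral>y. g x y \<partial>\<mu> \<partial>\<mu>) * expectation R"
    by (simp only: expectation_X_pair[OF ij(3) g bound])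
qed

lemma expectation_gap_kernel_div_num_poor:
  assumes "i < n" "j < n" "i \<noteq> j"
  shows "expectation (\<lambda>\<omega>. gap_kernel z (X i \<omega>) (X j \<omega>) / num_poor n \<omega>) =
    \<Delta>\<^sub>1 / p\<^sup>2 * expectation (\<lambda>\<omega>. both_poor z (X i \<omega>) (X j \<omega>) / num_poor n \<omega>)"
  using expectation_kernel_div_num_poor(2)[OF assms gap_kernel_measurable
      gap_kernel_abs_le gap_kernel_nonzeroD]
    expectation_kernel_div_num_poor(2)[OF assms both_poor_measurable
      both_poor_abs_le both_poor_nonzeroD] p_pos
  by (simp add: double_integral_gap_kernel double_integral_both_poor)

lemma expectation_num_poor: "expectation (num_poor n) = real n * p"
proof -
  have "expectation (\<lambda>\<omega>. indicator {..z} (X k \<omega>)) =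
      expectation (indicator {\<omega> \<in> space M. X k \<omega> \<le> z} :: 'a \<Rightarrow> real)" for k
    by (intro Bochner_Integration.integral_cong) (auto simp: indicator_def)
  then have "expectation (\<lambda>\<omega>. indicator {..z} (X k \<omega>)) = p" for k
    by (simp add: prob_X_le)
  moreover have "integrable M (\<lambda>\<omega>. indicator {..z} (X k \<omega>) :: real)" for k
    by (rule integrable_const_bound[where B=1]) auto
  ultimately show ?thesis
    unfolding num_poor_def[abs_def] by (simp add: Bochner_Integration.integral_sum)
qed

lemma prob_num_poor_eq_0: "prob {\<omega> \<in> space M. num_poor n \<omega> = 0} = (1 - p) ^ n"
proof (cases "n = 0")
  case False
  have "{\<omega> \<in> space M. num_poor n \<omega> = 0} = (\<Inter>k<n. X k -` {z<..} \<inter> space M)"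
    using False by (auto simp: num_poor_def sum_nonneg_eq_0_iff indicator_def not_le)
  also have "prob \<dots> = (\<Prod>k<n. prob (X k -` {z<..} \<inter> space M))"
    using False by (intro indep_varsD[OF indep]) auto
  also have "\<dots> = (\<Prod>k<n. 1 - p)"
  proof (intro prod.cong refl)
    fix k
    have "X k -` {z<..} \<inter> space M = space M - {\<omega> \<in> space M. X k \<omega> \<le> z}"
      by auto
    then show "prob (X k -` {z<..} \<inter> space M) = 1 - p"
      by (simp add: prob_compl prob_X_le)
  qed
  finally show ?thesis
    by simp
qed (simp add: num_poor_def prob_space)

lemma expectation_sum_both_poor_div_num_poor:
  "expectation (\<lambda>\<omega>. \<Sum>i<n. \<Sum>j\<in>{..<n}-{i}. both_poor z (X i \<omega>) (X j \<omega>) / num_poor n \<omega>) =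
    real n * p - 1 + (1 - p) ^ n"
proof -
  have "(\<Sum>i<n. \<Sum>j\<in>{..<n}-{i}. both_poor z (X i \<omega>) (X j \<omega>) / num_poor n \<omega>) =
      num_poor n \<omega> - 1 + of_bool (num_poor n \<omega> = 0)" for \<omega>
    using sum_offdiag_idem_div_sum[of "\<lambda>k. indicator {..z} (X k \<omega>)" n]
    by (simp add: both_poor_def num_poor_def indicator_def)
  moreover have "expectation (\<lambda>\<omega>. of_bool (num_poor n \<omega> = 0)) = (1 - p) ^ n"
  proof -
    have "expectation (\<lambda>\<omega>. of_bool (num_poor n \<omega> = 0)) =
        expectation (indicator {\<omega> \<in> space M. num_poor n \<omega> = 0} :: 'a \<Rightarrow> real)"
      by (intro Bochner_Integration.integral_cong) (auto simp: indicator_def)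
    then show ?thesis
      by (simp add: prob_num_poor_eq_0)
  qed
  moreover have "integrable M (num_poor n)"
    unfolding num_poor_def[abs_def]
    by (intro Bochner_Integration.integrable_sum integrable_const_bound[where B=1]) auto
  moreover have "integrable M (\<lambda>\<omega>. of_bool (num_poor n \<omega> = 0) :: real)"
    by (rule integrable_const_bound[where B=1]) auto
  ultimately show ?thesis
    by (simp add: expectation_num_poor prob_space)
qed

lemma U2_eq_num_poor:
  assumes "n \<ge> 2"
  shows "U2 z X n \<omega> = num_poor n \<omega> / real n"
proof -
  define a :: "nat \<Rightarrow> real" where "a k = indicator {..z} (X k \<omega>)" for k
  have "(\<Sum>i<n. \<Sum>j<i. psi2 z (X i \<omega>) (X j \<omega>)) = (\<Sum>i<n. \<Sum>j<i. a i / 2 + a j / 2)"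
    by (simp add: psi2_def a_def indicator_def of_bool_def add_divide_distrib)
  also have "\<dots> = (\<Sum>i<n. \<Sum>j\<in>{..<n}-{i}. a i / 2)"
    by (rule sum_lessThan_pairs_conv_offdiag)
  also have "\<dots> = (\<Sum>i<n. (real n - 1) * a i / 2)"
    using assms by (intro sum.cong refl) (simp add: of_nat_diff)
  also have "\<dots> = (real n - 1) * (\<Sum>i<n. a i) / 2"
    by (simp add: sum_distrib_left sum_divide_distrib)
  also have "(\<Sum>i<n. a i) = num_poor n \<omega>"
    by (simp add: num_poor_def a_def)
  finally have sum_psi2: "(\<Sum>i<n. \<Sum>j<i. psi2 z (X i \<omega>) (X j \<omega>)) = (real n - 1) * num_poor n \<omega> / 2" .
  show ?thesis
    using assms unfolding U2_def sum_psi2 real_choose_two by (simp add: field_simps)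
qed

lemma U1_eq_sum_gap_kernel:
  assumes "n \<ge> 2" and nonneg: "\<And>k. k < n \<Longrightarrow> X k \<omega> \<ge> 0"
  shows "U1 z X n \<omega> =
    (\<Sum>i<n. \<Sum>j\<in>{..<n}-{i}. gap_kernel z (X i \<omega>) (X j \<omega>)) / (real n * (real n - 1))"
proof -
  have "(\<Sum>i<n. \<Sum>j<i. psi1 z (X i \<omega>) (X j \<omega>)) =
      (\<Sum>i<n. \<Sum>j<i. gap_kernel z (X i \<omega>) (X j \<omega>) / 2 + gap_kernel z (X j \<omega>) (X i \<omega>) / 2)"
    using nonneg by (intro sum.cong refl) (auto simp: psi1_def gap_kernel_def)
  also have "\<dots> = (\<Sum>i<n. \<Sum>j\<in>{..<n}-{i}. gap_kernel z (X i \<omega>) (X j \<omega>) / 2)"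
    by (rule sum_lessThan_pairs_conv_offdiag)
  finally show ?thesis
    using assms(1) by (simp add: U1_def real_choose_two field_simps flip: sum_divide_distrib)
qed

text \<open>If no sample point is poor, both sides vanish because of x / 0 = 0.\<close>

lemma S_hat_eq_sum_gap_kernel:
  assumes "n \<ge> 2" and "\<And>k. k < n \<Longrightarrow> X k \<omega> \<ge> 0"
  shows "S_hat z X n \<omega> = 2 / (z * (real n - 1)) *
    (\<Sum>i<n. \<Sum>j\<in>{..<n}-{i}. gap_kernel z (X i \<omega>) (X j \<omega>) / num_poor n \<omega>)"
proof -
  define G where "G = (\<Sum>i<n. \<Sum>j\<in>{..<n}-{i}. gap_kernel z (X i \<omega>) (X j \<omega>))"
  have "S_hat z X n \<omega> = 2 / z * ((G / (real n * (real n - 1))) / (num_poor n \<omega> / real n))"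
    by (simp add: S_hat_def G_def U1_eq_sum_gap_kernel[OF assms] U2_eq_num_poor[OF assms(1)])
  also have "\<dots> = 2 / (z * (real n - 1)) * (G / num_poor n \<omega>)"
    using assms(1) by (simp add: divide_divide_eq_right)
  finally show ?thesis
    by (simp add: G_def sum_divide_distrib)
qed

lemma expectation_S_hat_eq_sum_gap_kernel:
  assumes n: "n \<ge> 2"
  shows "expectation (S_hat z X n) = 2 / (z * (real n - 1)) *
    expectation (\<lambda>\<omega>. \<Sum>i<n. \<Sum>j\<in>{..<n}-{i}. gap_kernel z (X i \<omega>) (X j \<omega>) / num_poor n \<omega>)"
proof -
  have "AE \<omega> in M. \<forall>k. X k \<omega> \<ge> 0"
    by (simp add: AE_all_countable nonneg)
  then have "AE \<omega> in M. S_hat z X n \<omega> = 2 / (z * (real n - 1)) *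
      (\<Sum>i<n. \<Sum>j\<in>{..<n}-{i}. gap_kernel z (X i \<omega>) (X j \<omega>) / num_poor n \<omega>)"
    by eventually_elim (simp add: S_hat_eq_sum_gap_kernel[OF n])
  moreover have "S_hat z X n \<in> borel_measurable M"
    unfolding S_hat_def U1_def U2_def psi1_def psi2_def by measurable
  moreover have "(\<lambda>\<omega>. 2 / (z * (real n - 1)) *
      (\<Sum>i<n. \<Sum>j\<in>{..<n}-{i}. gap_kernel z (X i \<omega>) (X j \<omega>) / num_poor n \<omega>)) \<in> borel_measurable M"
    unfolding gap_kernel_def by measurable
  ultimately have "expectation (S_hat z X n) = expectation (\<lambda>\<omega>. 2 / (z * (real n - 1)) *
      (\<Sum>i<n. \<Sum>j\<in>{..<n}-{i}. gap_kernel z (X i \<omega>) (X j \<omega>) / num_poor n \<omega>))"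
    by (rule integral_cong_AE[rotated 2])
  then show ?thesis
    by simp
qed

lemma expectation_S_hat:
  assumes n: "n \<ge> 2"
  shows "expectation (S_hat z X n) =
    2 * \<Delta>\<^sub>1 / (z * p\<^sup>2) * ((real n * p - 1 + (1 - p) ^ n) / (real n - 1))"
proof -
  have int_gap: "integrable M (\<lambda>\<omega>. gap_kernel z (X i \<omega>) (X j \<omega>) / num_poor n \<omega>)"
    and int_both: "integrable M (\<lambda>\<omega>. both_poor z (X i \<omega>) (X j \<omega>) / num_poor n \<omega>)"
    if "i < n" "j < n" "i \<noteq> j" for i j
    using expectation_kernel_div_num_poor(1)[OF that gap_kernel_measurable
        gap_kernel_abs_le gap_kernel_nonzeroD]
      expectation_kernel_div_num_poor(1)[OF that both_poor_measurable
        both_poor_abs_le both_poor_nonzeroD]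
    by simp_all
  have "expectation (\<lambda>\<omega>. \<Sum>i<n. \<Sum>j\<in>{..<n}-{i}. gap_kernel z (X i \<omega>) (X j \<omega>) / num_poor n \<omega>) =
      (\<Sum>i<n. \<Sum>j\<in>{..<n}-{i}. expectation (\<lambda>\<omega>. gap_kernel z (X i \<omega>) (X j \<omega>) / num_poor n \<omega>))"
    by (rule integral_sum_offdiag[OF int_gap])
  also have "\<dots> = \<Delta>\<^sub>1 / p\<^sup>2 *
      (\<Sum>i<n. \<Sum>j\<in>{..<n}-{i}. expectation (\<lambda>\<omega>. both_poor z (X i \<omega>) (X j \<omega>) / num_poor n \<omega>))"
    by (simp add: expectation_gap_kernel_div_num_poor sum_distrib_left)
  also have "(\<Sum>i<n. \<Sum>j\<in>{..<n}-{i}. expectation (\<lambda>\<omega>. both_poor z (X i \<omega>) (X j \<omega>) / num_poor n \<omega>)) =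
      expectation (\<lambda>\<omega>. \<Sum>i<n. \<Sum>j\<in>{..<n}-{i}. both_poor z (X i \<omega>) (X j \<omega>) / num_poor n \<omega>)"
    by (rule integral_sum_offdiag[OF int_both, symmetric])
  also have "\<dots> = real n * p - 1 + (1 - p) ^ n"
    by (rule expectation_sum_both_poor_div_num_poor)
  finally have "expectation (\<lambda>\<omega>. \<Sum>i<n. \<Sum>j\<in>{..<n}-{i}. gap_kernel z (X i \<omega>) (X j \<omega>) / num_poor n \<omega>) =
      \<Delta>\<^sub>1 / p\<^sup>2 * (real n * p - 1 + (1 - p) ^ n)" .
  then show ?thesis
    unfolding expectation_S_hat_eq_sum_gap_kernel[OF n] by (simp add: field_simps)
qed

end

lemma LIMSEQ_linear_plus_power_div_pred:
  fixes p :: real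
  assumes "0 < p" "p \<le> 1"
  shows "(\<lambda>n. (real n * p - 1 + (1 - p) ^ n) / (real n - 1)) \<longlonglongrightarrow> p"
proof -
  have "(\<lambda>n. (1 - p) ^ n) \<longlonglongrightarrow> 0"
    using assms by (intro LIMSEQ_power_zero) auto
  moreover have "(\<lambda>n. 1 / (real n - 1)) \<longlonglongrightarrow> 0"
    by real_asymp
  ultimately have "(\<lambda>n. p + (p - 1 + (1 - p) ^ n) * (1 / (real n - 1))) \<longlonglongrightarrow> p + (p - 1 + 0) * 0"
    by (intro tendsto_add tendsto_mult tendsto_const)
  moreover have "\<forall>\<^sub>F n in sequentially.
      p + (p - 1 + (1 - p) ^ n) * (1 / (real n - 1)) =
      (real n * p - 1 + (1 - p) ^ n) / (real n - 1)"
    using eventually_ge_at_top[of 2] by eventually_elim (simp add: field_simps)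
  ultimately show ?thesis
    by (simp add: tendsto_cong)
qed

theorem theorem2:
  fixes M :: "'a measure" and X :: "nat \<Rightarrow> 'a \<Rightarrow> real"
    and F :: "real \<Rightarrow> real" and z p :: real
  assumes "prob_space M"
    and rv: "\<And>i. X i \<in> borel_measurable M"
    and indep: "prob_space.indep_vars M (\<lambda>_. borel) X UNIV"
    and cdf: "\<And>i x. F x = measure M {\<omega> \<in> space M. X i \<omega> \<le> x}"
    and nonneg: "\<And>i. AE \<omega> in M. X i \<omega> \<ge> 0"
    and z_pos: "z > 0"
    and p_def: "p = F z" and p_pos: "p > 0"
    and Q_cont: "continuous_on {0<..p} (quantile F)"
    and Q_cont0: "\<exists>L. (quantile F \<longlongrightarrow> L) (at_right 0)"
    and Q_int: "set_integrable lborel {0<..p} (quantile F)"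
  shows "(\<lambda>n. prob_space.expectation M (S_hat z X n))
           \<longlonglongrightarrow> sen_index z F (distr M borel (X 0))"
proof -
  interpret poverty_sample M X F z p
    unfolding poverty_sample_def poverty_sample_axioms_def using assms by auto
  have "p \<le> 1"
    using prob_X_le[of 0] prob_le_1 by metis
  let ?c = "2 * \<Delta>\<^sub>1 / (z * p\<^sup>2)"
  have "(\<lambda>n. ?c * ((real n * p - 1 + (1 - p) ^ n) / (real n - 1))) \<longlonglongrightarrow> ?c * p"
    using LIMSEQ_linear_plus_power_div_pred[OF p_pos \<open>p \<le> 1\<close>] by (rule tendsto_mult_left)
  moreover have "\<forall>\<^sub>F n in sequentially.
      ?c * ((real n * p - 1 + (1 - p) ^ n) / (real n - 1)) = expectation (S_hat z X n)"
    using eventually_ge_at_top[of 2] by eventually_elim (simp add: expectation_S_hat)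
  moreover have "?c * p = sen_index z F \<mu>"
    using p_pos by (simp add: sen_index_def p_def power2_eq_square)
  ultimately show ?thesis
    using tendsto_cong by force
qed

end
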